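(* Let $H=(V,E)$ be a $k$-uniform hypergraph and $U\subseteq V$ such that $|e\cap U|\leq2$ for all $e\in E$; let $f(e)=2$ if $|e\cap U|=2$ and $f(e)=1$ otherwise. Then for any $X\subseteq V\setminus U$, over the polynomial ring over $\mathrm{GF}(2^m)$ (any $m\geq1$) in the variables $\{v_e\}_{e\in E}$, $$W_{2,f}(H,U,X)=\sum_{i=0}^{|U|}Z\!\left(\frac{|V|}{k}-\left\lfloor\frac{|U|+i}{2}\right\rfloor\right)M_i,$$ where $M_i=\sum_{M\in\mathcal{M}_i}\prod_{e\in M}v_e^{p(e)}$, $\mathcal{M}_i$ being the set of perfect matchings containing exactly $i$ loops in the projected hypergraph on $U$ of $H$ restricted to the edges disjoint from $X$ (with $p(e)=1$ for loops and $p(e)=2$ otherwise), and $Z(j)=\sum_{E'\subseteq Z,\,|E'|=j}\prod_{e'\in E'}v_{e'}$, with $Z$ the set of edges $e\in E$ satisfying $e\cap X=\emptyset$ and $e\cap U=\emptyset$ (so $Z(j)=0$ if $j<0$).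
   Context: A hypergraph $H=(V,E)$ has a finite vertex set $V$ and a multiset $E$ of subsets of $V$; $k$-uniform means all edges have size $k$. Subsets of $E$ treat multiset occurrences as distinct. Each $e\in E$ has a variable $v_e$. For $U\subseteq V$ the projected hypergraph has one edge $e\cap U$ per $e\in E$; $e$ is a loop if $|e\cap U|=1$. A perfect matching of the projected hypergraph (of a set of edges) is a subset $M$ of those edges whose projections on $U$ are nonempty, pairwise disjoint and cover $U$. $W_{2,f}(H,U,X)=\sum_{E''}\prod_{e\in E''}v_e^{f(e)}$, the sum over all $E''\subseteq E$ with: $e\cap X=\emptyset$ for all $e\in E''$; $|E''|=|V|/k$; $U\subseteq\bigcup_{e\in E''}e$; and $e_1\cap e_2\cap U=\emptyset$ for all distinct $e_1,e_2\in E''$. *)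

theory Defs
  imports Complex_Main
begin

text \<open>A hypergraph with a finite vertex set V and a multiset of edges is represented
by a finite index set E of edge names together with a map ed giving the vertex set
of each edge (so repeated edges are distinct indices).\<close>

definition W2f :: "('e \<Rightarrow> 'a set) \<Rightarrow> 'e set \<Rightarrow> 'a set \<Rightarrow> nat \<Rightarrow> 'a set \<Rightarrow> 'a set
    \<Rightarrow> ('e \<Rightarrow> nat) \<Rightarrow> ('e \<Rightarrow> 'r::comm_ring_1) \<Rightarrow> 'r" where
  "W2f ed E V k U X f v =
     (\<Sum>E'' \<in> {E''. E'' \<subseteq> E
                  \<and> (\<forall>e\<in>E''. ed e \<inter> X = {})
                  \<and> real (card E'') = real (card V) / real k
                  \<and> U \<subseteq> (\<Union>e\<in>E''. ed e)
                  \<and> (\<forall>e1\<in>E''. \<forall>e2\<in>E''. e1 \<noteq> e2 \<longrightarrow> ed e1 \<inter> ed e2 \<inter> U = {})}.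
        \<Prod>e\<in>E''. v e ^ f e)"

definition perfect_matching_proj :: "('e \<Rightarrow> 'a set) \<Rightarrow> 'e set \<Rightarrow> 'a set \<Rightarrow> 'e set \<Rightarrow> bool" where
  "perfect_matching_proj ed F U M \<longleftrightarrow>
     M \<subseteq> F
     \<and> (\<forall>e\<in>M. ed e \<inter> U \<noteq> {})
     \<and> (\<forall>e1\<in>M. \<forall>e2\<in>M. e1 \<noteq> e2 \<longrightarrow> ed e1 \<inter> ed e2 \<inter> U = {})
     \<and> U \<subseteq> (\<Union>e\<in>M. ed e \<inter> U)"

definition num_loops :: "('e \<Rightarrow> 'a set) \<Rightarrow> 'a set \<Rightarrow> 'e set \<Rightarrow> nat" where
  "num_loops ed U M = card {e\<in>M. card (ed e \<inter> U) = 1}"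

definition Mpoly :: "('e \<Rightarrow> 'a set) \<Rightarrow> 'e set \<Rightarrow> 'a set \<Rightarrow> 'a set \<Rightarrow> ('e \<Rightarrow> 'r::comm_ring_1)
    \<Rightarrow> nat \<Rightarrow> 'r" where
  "Mpoly ed E U X v i =
     (\<Sum>M \<in> {M. perfect_matching_proj ed {e\<in>E. ed e \<inter> X = {}} U M \<and> num_loops ed U M = i}.
        \<Prod>e\<in>M. v e ^ (if card (ed e \<inter> U) = 1 then 1 else 2))"

text \<open>Z(j) for a real argument j: sum over subsets of the edges disjoint from X and U
of size j (zero if j is negative or not an integer).\<close>
definition Zpoly :: "('e \<Rightarrow> 'a set) \<Rightarrow> 'e set \<Rightarrow> 'a set \<Rightarrow> 'a set \<Rightarrow> ('e \<Rightarrow> 'r::comm_ring_1)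
    \<Rightarrow> real \<Rightarrow> 'r" where
  "Zpoly ed E U X v j =
     (\<Sum>E' \<in> {E'. E' \<subseteq> {e\<in>E. ed e \<inter> X = {} \<and> ed e \<inter> U = {}} \<and> real (card E') = j}.
        \<Prod>e\<in>E'. v e)"

end

theory Submission
  imports Defs
begin

text \<open>Splitting an edge set counted by W2f into the edges that meet U and those that
avoid U is a bijection onto pairs (M, E') where M is a perfect matching of the
projection onto U and E' is any set of edges avoiding X and U of the complementary
size. Since every projected edge has one or two vertices, 2 |M| = |U| + (number of
loops of M), so the number of loops determines |M|.\<close>

lemma perfect_matching_proj_card_edge_pos:
  assumes "perfect_matching_proj ed F U M" and "finite U" and "e \<in> M"
  shows "0 < card (ed e \<inter> U)"
  using assms unfolding perfect_matching_proj_def by (simp add: card_gt_0_iff)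

lemma card_add_num_loops_perfect_matching_proj:
  assumes "finite U" and "finite M"
    and "\<forall>e\<in>M. card (ed e \<inter> U) \<le> 2"
    and "perfect_matching_proj ed F U M"
  shows "card U + num_loops ed U M = 2 * card M"
proof -
  have disjoint: "\<forall>e1\<in>M. \<forall>e2\<in>M. e1 \<noteq> e2 \<longrightarrow> ed e1 \<inter> ed e2 \<inter> U = {}"
    and cover: "U = (\<Union>e\<in>M. ed e \<inter> U)"
    using assms(4) unfolding perfect_matching_proj_def by auto
  have size: "card (ed e \<inter> U) = 2 - (if card (ed e \<inter> U) = 1 then 1 else 0)" if "e \<in> M" for e
    using perfect_matching_proj_card_edge_pos[OF assms(4,1) that] that assms(3) by auto
  have "card U = (\<Sum>e\<in>M. card (ed e \<inter> U))"
    by (subst cover, rule card_UN_disjoint) (use assms(1,2) disjoint in auto)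
  also have "\<dots> = (\<Sum>e\<in>M. 2 - (if card (ed e \<inter> U) = 1 then 1 else 0::nat))"
    using size by (rule sum.cong[OF refl])
  finally have "card U + num_loops ed U M
      = (\<Sum>e\<in>M. (2 - (if card (ed e \<inter> U) = 1 then 1 else 0)) + (if card (ed e \<inter> U) = 1 then 1 else 0::nat))"
    unfolding num_loops_def sum.distrib using assms(2) by (simp add: sum.If_cases Int_def)
  also have "\<dots> = 2 * card M" by simp
  finally show ?thesis .
qed

lemma num_loops_le_card: "finite M \<Longrightarrow> num_loops ed U M \<le> card M"
  unfolding num_loops_def by (rule card_mono) auto

definition exact_cover_proj :: "('e \<Rightarrow> 'a set) \<Rightarrow> 'e set \<Rightarrow> 'a set \<Rightarrow> 'a set \<Rightarrow> 'e set \<Rightarrow> bool" where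
  "exact_cover_proj ed E U X C \<longleftrightarrow>
     C \<subseteq> E \<and> (\<forall>e\<in>C. ed e \<inter> X = {}) \<and> U \<subseteq> (\<Union>e\<in>C. ed e)
     \<and> (\<forall>e1\<in>C. \<forall>e2\<in>C. e1 \<noteq> e2 \<longrightarrow> ed e1 \<inter> ed e2 \<inter> U = {})"

lemma W2f_eq_sum_exact_cover_proj:
  "W2f ed E V k U X f v =
     (\<Sum>C | exact_cover_proj ed E U X C \<and> real (card C) = real (card V) / real k. \<Prod>e\<in>C. v e ^ f e)"
  unfolding W2f_def exact_cover_proj_def by (rule sum.cong) auto

lemma exact_cover_proj_iff_split:
  "exact_cover_proj ed E U X C \<longleftrightarrow>
     perfect_matching_proj ed {e\<in>E. ed e \<inter> X = {}} U {e\<in>C. ed e \<inter> U \<noteq> {}}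
     \<and> {e\<in>C. ed e \<inter> U = {}} \<subseteq> {e\<in>E. ed e \<inter> X = {} \<and> ed e \<inter> U = {}}"
    (is "?cover \<longleftrightarrow> perfect_matching_proj ed ?F U ?M \<and> ?Z")
proof
  assume ?cover
  then have sub: "C \<subseteq> E" and avoid_X: "\<forall>e\<in>C. ed e \<inter> X = {}" and cov: "U \<subseteq> (\<Union>e\<in>C. ed e)"
    and disj: "\<forall>e1\<in>C. \<forall>e2\<in>C. e1 \<noteq> e2 \<longrightarrow> ed e1 \<inter> ed e2 \<inter> U = {}"
    unfolding exact_cover_proj_def by auto
  have "U \<subseteq> (\<Union>e\<in>?M. ed e \<inter> U)" using cov by blast
  then show "perfect_matching_proj ed ?F U ?M \<and> ?Z"
    using sub avoid_X disj unfolding perfect_matching_proj_def by blast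
next
  assume "perfect_matching_proj ed ?F U ?M \<and> ?Z"
  then have M: "?M \<subseteq> ?F" "U \<subseteq> (\<Union>e\<in>?M. ed e \<inter> U)"
    and disj: "\<forall>e1\<in>?M. \<forall>e2\<in>?M. e1 \<noteq> e2 \<longrightarrow> ed e1 \<inter> ed e2 \<inter> U = {}" and ?Z
    unfolding perfect_matching_proj_def by auto
  have "\<forall>e1\<in>C. \<forall>e2\<in>C. e1 \<noteq> e2 \<longrightarrow> ed e1 \<inter> ed e2 \<inter> U = {}"
    using disj by blast
  moreover have "C \<subseteq> E" "\<forall>e\<in>C. ed e \<inter> X = {}" using M(1) \<open>?Z\<close> by blast+
  moreover have "U \<subseteq> (\<Union>e\<in>C. ed e)" using M(2) by blast
  ultimately show ?cover unfolding exact_cover_proj_def by blast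
qed

lemma bij_betw_union_exact_cover_proj:
  fixes ed :: "'e \<Rightarrow> 'a set" and N :: real
  assumes finE: "finite E"
  shows "bij_betw (\<lambda>(M, E'). M \<union> E')
    (SIGMA M:{M. perfect_matching_proj ed {e\<in>E. ed e \<inter> X = {}} U M}.
       {E'. E' \<subseteq> {e\<in>E. ed e \<inter> X = {} \<and> ed e \<inter> U = {}} \<and> real (card E') = N - real (card M)})
    {C. exact_cover_proj ed E U X C \<and> real (card C) = N}"
proof -
  define PM where "PM = {M. perfect_matching_proj ed {e\<in>E. ed e \<inter> X = {}} U M}"
  define ZZ where "ZZ M = {E'. E' \<subseteq> {e\<in>E. ed e \<inter> X = {} \<and> ed e \<inter> U = {}} \<and> real (card E') = N - real (card M)}"
    for M :: "'e set"
  define S where "S = {C. exact_cover_proj ed E U X C \<and> real (card C) = N}"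
  define meet where "meet C = {e\<in>C. ed e \<inter> U \<noteq> {}}" for C
  define avoid where "avoid C = {e\<in>C. ed e \<inter> U = {}}" for C
  have PM_sub: "M \<subseteq> E" and PM_meet: "meet M = M" if "M \<in> PM" for M
    using that unfolding PM_def meet_def perfect_matching_proj_def by auto
  have ZZ_sub: "E' \<subseteq> E" and ZZ_avoid: "avoid E' = E'" if "E' \<in> ZZ M" for M E'
    using that unfolding ZZ_def avoid_def by auto
  have meet_avoid_union: "meet C \<union> avoid C = C" for C
    unfolding meet_def avoid_def by auto
  have card_meet_avoid: "card C = card (meet C) + card (avoid C)" if "finite C" for C
    using that by (subst card_Un_disjoint[symmetric]) (auto simp: meet_def avoid_def intro: arg_cong[where f = card])
  have union_split: "meet (M \<union> E') = M" "avoid (M \<union> E') = E'" if "M \<in> PM" "E' \<in> ZZ M" for M E'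
    using PM_meet[OF that(1)] ZZ_avoid[OF that(2)] unfolding meet_def avoid_def by blast+
  have union_in_S: "M \<union> E' \<in> S" if "M \<in> PM" "E' \<in> ZZ M" for M E'
  proof -
    have "finite (M \<union> E')"
      using finite_subset[OF PM_sub[OF that(1)] finE] finite_subset[OF ZZ_sub[OF that(2)] finE] by simp
    then have "real (card (M \<union> E')) = N"
      using card_meet_avoid union_split[OF that] that(2) unfolding ZZ_def by simp
    moreover have "exact_cover_proj ed E U X (M \<union> E')"
      using union_split[OF that] that unfolding exact_cover_proj_iff_split meet_def avoid_def PM_def ZZ_def
      by simp
    ultimately show ?thesis unfolding S_def by simp
  qed
  have split_in_Sigma: "(meet C, avoid C) \<in> Sigma PM ZZ" if "C \<in> S" for C
  proof -
    have cover: "exact_cover_proj ed E U X C" and card_C: "real (card C) = N"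
      using that unfolding S_def by auto
    then have "finite C" using finite_subset[OF _ finE] unfolding exact_cover_proj_def by blast
    then show ?thesis
      using cover card_C card_meet_avoid[of C]
      unfolding exact_cover_proj_iff_split PM_def ZZ_def meet_def avoid_def by simp
  qed
  have "bij_betw (\<lambda>(M, E'). M \<union> E') (Sigma PM ZZ) S"
    by (rule bij_betw_byWitness[where f' = "\<lambda>C. (meet C, avoid C)"])
      (use union_in_S union_split split_in_Sigma in \<open>auto simp: meet_avoid_union\<close>)
  then show ?thesis unfolding PM_def ZZ_def S_def .
qed

lemma W2f_eq_sum_perfect_matching_proj:
  fixes ed :: "'e \<Rightarrow> 'a set" and v :: "'e \<Rightarrow> 'r::comm_ring_1"
  assumes finE: "finite E"
    and f_free: "\<forall>e\<in>E. ed e \<inter> U = {} \<longrightarrow> f e = 1"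
  shows "W2f ed E V k U X f v =
    (\<Sum>M | perfect_matching_proj ed {e\<in>E. ed e \<inter> X = {}} U M.
       (\<Prod>e\<in>M. v e ^ f e) * Zpoly ed E U X v (real (card V) / real k - real (card M)))"
proof -
  define N where "N = real (card V) / real k"
  define PM where "PM = {M. perfect_matching_proj ed {e\<in>E. ed e \<inter> X = {}} U M}"
  define ZZ where "ZZ M = {E'. E' \<subseteq> {e\<in>E. ed e \<inter> X = {} \<and> ed e \<inter> U = {}} \<and> real (card E') = N - real (card M)}"
    for M :: "'e set"
  have PM_sub: "M \<subseteq> E" if "M \<in> PM" for M
    using that unfolding PM_def perfect_matching_proj_def by auto
  have ZZ_sub: "E' \<subseteq> E" if "E' \<in> ZZ M" for M E'
    using that unfolding ZZ_def by auto
  have union_weight: "(\<Prod>e\<in>M \<union> E'. v e ^ f e) = (\<Prod>e\<in>M. v e ^ f e) * prod v E'"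
    if M: "M \<in> PM" and E': "E' \<in> ZZ M" for M E'
  proof -
    have E'_free: "\<forall>e\<in>E'. e \<in> E \<and> ed e \<inter> U = {}" using E' unfolding ZZ_def by blast
    then have "(\<Prod>e\<in>E'. v e ^ f e) = prod v E'" using f_free by simp
    moreover have "M \<inter> E' = {}"
      using M E'_free unfolding PM_def perfect_matching_proj_def by blast
    ultimately show ?thesis
      by (simp add: prod.union_disjoint[OF finite_subset[OF PM_sub[OF M] finE] finite_subset[OF ZZ_sub[OF E'] finE]])
  qed
  have "(\<Sum>M\<in>PM. (\<Prod>e\<in>M. v e ^ f e) * Zpoly ed E U X v (N - real (card M)))
      = (\<Sum>M\<in>PM. \<Sum>E'\<in>ZZ M. (\<Prod>e\<in>M. v e ^ f e) * prod v E')"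
    unfolding Zpoly_def sum_distrib_left ZZ_def by simp
  also have "\<dots> = (\<Sum>(M, E')\<in>Sigma PM ZZ. (\<Prod>e\<in>M \<union> E'. v e ^ f e))"
  proof (subst sum.Sigma)
    show "finite PM" by (rule finite_subset[of _ "Pow E"]) (use PM_sub finE in auto)
    have "finite (ZZ M)" for M
      by (rule finite_subset[of _ "Pow E"]) (use ZZ_sub finE in auto)
    then show "\<forall>M\<in>PM. finite (ZZ M)" by blast
  qed (use union_weight in \<open>auto intro!: sum.cong\<close>)
  also have "\<dots> = (\<Sum>C | exact_cover_proj ed E U X C \<and> real (card C) = N. \<Prod>e\<in>C. v e ^ f e)"
    using sum.reindex_bij_betw[OF bij_betw_union_exact_cover_proj[OF finE, of ed X U N]]
    unfolding PM_def ZZ_def by (simp add: case_prod_unfold)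
  finally show ?thesis
    unfolding W2f_eq_sum_exact_cover_proj N_def PM_def by simp
qed

lemma sum_perfect_matching_proj_group_num_loops:
  fixes c :: "nat \<Rightarrow> 'r::comm_semiring_1"
  assumes finF: "finite F" and finU: "finite U" and le2: "\<forall>e\<in>F. card (ed e \<inter> U) \<le> 2"
  shows "(\<Sum>M | perfect_matching_proj ed F U M. c (card M) * w M) =
    (\<Sum>i=0..card U. c ((card U + i) div 2) *
       (\<Sum>M | perfect_matching_proj ed F U M \<and> num_loops ed U M = i. w M))"
proof -
  define PM where "PM = {M. perfect_matching_proj ed F U M}"
  have PM_sub: "M \<subseteq> F" if "M \<in> PM" for M
    using that unfolding PM_def perfect_matching_proj_def by auto
  have PM_card: "card U + num_loops ed U M = 2 * card M" if "M \<in> PM" for M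
    using card_add_num_loops_perfect_matching_proj[OF finU finite_subset[OF PM_sub[OF that] finF]]
      that PM_sub[OF that] le2 unfolding PM_def by blast
  have loops_le: "num_loops ed U M \<le> card U" if "M \<in> PM" for M
    using PM_card[OF that] num_loops_le_card[OF finite_subset[OF PM_sub[OF that] finF], of ed U]
    by linarith
  have "(\<Sum>M\<in>PM. c (card M) * w M) =
      (\<Sum>i=0..card U. \<Sum>M | M \<in> PM \<and> num_loops ed U M = i. c (card M) * w M)"
  proof (rule sum.group[symmetric])
    show "finite PM" by (rule finite_subset[of _ "Pow F"]) (use PM_sub finF in auto)
    show "num_loops ed U ` PM \<subseteq> {0..card U}" using loops_le by auto
  qed simp
  also have "\<dots> = (\<Sum>i=0..card U. \<Sum>M | M \<in> PM \<and> num_loops ed U M = i. c ((card U + i) div 2) * w M)"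
    using PM_card by (auto intro!: sum.cong)
  finally show ?thesis
    unfolding PM_def sum_distrib_left by simp
qed

theorem lemma4p3:
  fixes ed :: "'e \<Rightarrow> 'a set" and E :: "'e set" and V U X :: "'a set" and k :: nat
    and v :: "'e \<Rightarrow> 'r::comm_ring_1"
  assumes "finite V" and "finite E"
    and "\<forall>e\<in>E. ed e \<subseteq> V \<and> card (ed e) = k"
    and "U \<subseteq> V"
    and "\<forall>e\<in>E. card (ed e \<inter> U) \<le> 2"
    and "X \<subseteq> V - U"
    and "(2::'r) = 0"
  shows "W2f ed E V k U X (\<lambda>e. if card (ed e \<inter> U) = 2 then 2 else 1) v =
         (\<Sum>i=0..card U.
            Zpoly ed E U X v (real (card V) / real k - real ((card U + i) div 2))
            * Mpoly ed E U X v i)"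
proof -
  define F where "F = {e\<in>E. ed e \<inter> X = {}}"
  define Z where "Z j = Zpoly ed E U X v (real (card V) / real k - real j)" for j
  have finU: "finite U" using assms(1,4) finite_subset by auto
  have exponent: "(if card (ed e \<inter> U) = 2 then 2 else 1::nat) = (if card (ed e \<inter> U) = 1 then 1 else 2)"
    if "perfect_matching_proj ed F U M" "e \<in> M" for M e
  proof -
    have "e \<in> E" using that unfolding F_def perfect_matching_proj_def by auto
    then show ?thesis
      using perfect_matching_proj_card_edge_pos[OF that(1) finU that(2)] assms(5) by auto
  qed
  have "W2f ed E V k U X (\<lambda>e. if card (ed e \<inter> U) = 2 then 2 else 1) v =
      (\<Sum>M | perfect_matching_proj ed F U M.
         (\<Prod>e\<in>M. v e ^ (if card (ed e \<inter> U) = 2 then 2 else 1)) * Z (card M))"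
    unfolding F_def Z_def by (rule W2f_eq_sum_perfect_matching_proj) (auto simp: assms(2))
  also have "\<dots> = (\<Sum>M | perfect_matching_proj ed F U M.
      Z (card M) * (\<Prod>e\<in>M. v e ^ (if card (ed e \<inter> U) = 1 then 1 else 2)))"
    using exponent by (intro sum.cong refl) (simp add: mult.commute)
  also have "\<dots> = (\<Sum>i=0..card U. Z ((card U + i) div 2) * Mpoly ed E U X v i)"
    unfolding Mpoly_def F_def
    by (rule sum_perfect_matching_proj_group_num_loops) (use assms(2,5) finU in auto)
  finally show ?thesis unfolding Z_def .
qed

end
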